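(* Let $\mathbf V,\mathbf W$ be nonnegative arrays with $V_{1,1}=W_1=1$, $V_{n,k}>0$ for all $1\le k\le n$ and $W_s>0$ for all $s\ge1$, such that $\mathsf{Gibbs}_{[n]}(\mathbf V,\mathbf W)$ is a probability distribution for every $n$. Fix $n$, let $\Pi_{n+1}\sim\mathsf{Gibbs}_{[n+1]}(\mathbf V,\mathbf W)$, and let $\mathbf z=(z_1,\dots,z_{n+1})$ be its cluster membership vector, clusters labelled $1,2,\dots$ in order of first appearance. Given $\mathbf z_{1:n}=(z_1,\dots,z_n)$ with $k$ clusters of sizes $n_1,\dots,n_k$, one has $$\mathbb P(z_{n+1}=j\mid \mathbf z_{1:n})\propto\begin{cases} f(n_j), & j=1,\dots,k,\\ g(n,k), & j=k+1,\end{cases}$$ where $f(m)=W_{m+1}/W_m$ and $g(n,k)=V_{n+1,k+1}/V_{n+1,k}$. Moreover, $f$ is nondecreasing on $\mathbb N$ if and only if $\mathsf{Gibbs}_{[n]}(\mathbf V,\mathbf W)$ is balance-averse for every $n\ge1$, and $f$ is nonincreasing on $\mathbb N$ if and only if $\mathsf{Gibbs}_{[n]}(\mathbf V,\mathbf W)$ is balance-seeking for every $n\ge1$.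
   Context: For positive integers $k\le n$, $\mathcal I_n^k$ denotes the set of integer partitions of $n$ into $k$ parts, i.e. nonincreasing $k$-tuples $\mathbf n=(n_1,\dots,n_k)$ of positive integers with $\sum_j n_j=n$. For $\mathbf n,\mathbf n'\in\mathcal I_n^k$ write $\mathbf n\prec\mathbf n'$ if $\mathbf n\neq\mathbf n'$ and $\sum_{j=1}^J n_j\ge\sum_{j=1}^J n'_j$ for all $J=1,\dots,k$. A random partition $\Pi_n$ of $[n]$ is finitely exchangeable if its law is invariant under permutations of $[n]$; its EPPF is the symmetric function $p^{(n)}$ with $\mathbb P(\Pi_n=\{S_1,\dots,S_k\})=p^{(n)}(|S_1|,\dots,|S_k|)$. An EPPF is balance-averse if for all $k\le n$ and $\mathbf n,\mathbf n'\in\mathcal I_n^k$, $\mathbf n\prec\mathbf n'$ implies $p^{(n)}(\mathbf n)\ge p^{(n)}(\mathbf n')$; balance-seeking if it implies $p^{(n)}(\mathbf n)\le p^{(n)}(\mathbf n')$. $\Pi_n\sim\mathsf{Gibbs}_{[n]}(\mathbf V,\mathbf W)$ means $\Pi_n$ has EPPF $p^{(n)}(n_1,\dots,n_k)=V_{n,k}\prod_{j=1}^kW_{n_j}$. *)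

theory Defs
  imports Complex_Main "HOL-Library.Disjoint_Sets"
begin

definition set_partitions :: "nat \<Rightarrow> nat set set set" where
  "set_partitions n = {P. partition_on {1..n} P}"

definition gibbs :: "(nat \<Rightarrow> nat \<Rightarrow> real) \<Rightarrow> (nat \<Rightarrow> real) \<Rightarrow> nat \<Rightarrow> nat set set \<Rightarrow> real" where
  "gibbs V W n P = V n (card P) * (\<Prod>B\<in>P. W (card B))"

definition gibbs_prob :: "(nat \<Rightarrow> nat \<Rightarrow> real) \<Rightarrow> (nat \<Rightarrow> real) \<Rightarrow> nat \<Rightarrow> nat set set set \<Rightarrow> real" where
  "gibbs_prob V W n E = (\<Sum>P\<in>set_partitions n \<inter> E. gibbs V W n P)"

definition gibbs_cond :: "(nat \<Rightarrow> nat \<Rightarrow> real) \<Rightarrow> (nat \<Rightarrow> real) \<Rightarrow> nat \<Rightarrow> nat set set set \<Rightarrow> nat set set set \<Rightarrow> real" where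
  "gibbs_cond V W n A B = gibbs_prob V W n (A \<inter> B) / gibbs_prob V W n B"

(* Cluster membership vector: clusters labelled 1,2,... in order of first appearance
   (i.e. ordered by their least element). *)
definition block_of :: "nat set set \<Rightarrow> nat \<Rightarrow> nat set" where
  "block_of P i = (THE B. B \<in> P \<and> i \<in> B)"

definition zlab :: "nat set set \<Rightarrow> nat \<Rightarrow> nat" where
  "zlab P i = card {B' \<in> P. Min B' \<le> Min (block_of P i)}"

definition int_partitions :: "nat \<Rightarrow> nat \<Rightarrow> nat list set" where
  "int_partitions n k = {ns. length ns = k \<and> sorted_wrt (\<ge>) ns \<and> (\<forall>x\<in>set ns. 0 < x) \<and> sum_list ns = n}"

definition dom_prec :: "nat list \<Rightarrow> nat list \<Rightarrow> bool" where
  "dom_prec ns ns' \<longleftrightarrow> ns \<noteq> ns' \<and>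
     (\<forall>J\<in>{1..length ns}. sum_list (take J ns) \<ge> sum_list (take J ns'))"

(* p n ns = p^{(n)}(ns) : an EPPF as a function of block sizes *)
definition balance_averse :: "(nat \<Rightarrow> nat list \<Rightarrow> real) \<Rightarrow> nat \<Rightarrow> bool" where
  "balance_averse p n \<longleftrightarrow> (\<forall>k\<in>{1..n}. \<forall>ns\<in>int_partitions n k. \<forall>ns'\<in>int_partitions n k.
      dom_prec ns ns' \<longrightarrow> p n ns \<ge> p n ns')"

definition balance_seeking :: "(nat \<Rightarrow> nat list \<Rightarrow> real) \<Rightarrow> nat \<Rightarrow> bool" where
  "balance_seeking p n \<longleftrightarrow> (\<forall>k\<in>{1..n}. \<forall>ns\<in>int_partitions n k. \<forall>ns'\<in>int_partitions n k.
      dom_prec ns ns' \<longrightarrow> p n ns \<le> p n ns')"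

definition gibbs_eppf :: "(nat \<Rightarrow> nat \<Rightarrow> real) \<Rightarrow> (nat \<Rightarrow> real) \<Rightarrow> nat \<Rightarrow> nat list \<Rightarrow> real" where
  "gibbs_eppf V W n ns = V n (length ns) * prod_list (map W ns)"

end

(*
  The prediction rule comes from the fact that, given the labels of 1..n, the labels extend to
  1..n+1 in exactly k+1 ways: n+1 joins the j-th block or opens a new one. The conditional
  probability of each extension is its Gibbs weight divided by a common normaliser, and comparing
  weights with that of the original partition leaves the factors W(n_j+1)/W(n_j) and
  V(n+1,k+1)/V(n+1,k).

  The ratio f is nondecreasing exactly when ln W has nondecreasing increments, i.e. is a convex
  sequence. Karamata's inequality then says that the product of W over the parts grows along the
  dominance order, which is balance aversion; conversely the pair [m+2, m] > [m+1, m+1] of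
  partitions of 2m+2 into two parts recovers f m <= f (m+1) from balance aversion. Balance
  seeking is the same argument applied to 1/W.
*)

theory Submission
  imports Defs
begin

(* With truncated subtraction, y i - s is the positive part; since y is antitone, the indices
   where it is nonzero form an initial segment {..<J}. *)
lemma hinge_sum_le:
  fixes x y :: "nat \<Rightarrow> nat"
  assumes y_antimono: "\<And>i j. i \<le> j \<Longrightarrow> j < k \<Longrightarrow> y j \<le> y i"
    and partial_sums: "\<And>J. J \<le> k \<Longrightarrow> (\<Sum>i<J. y i) \<le> (\<Sum>i<J. x i)"
  shows "(\<Sum>i<k. y i - s) \<le> (\<Sum>i<k. x i - s)"
proof -
  obtain J where J: "J \<le> k" "\<And>i. i < k \<Longrightarrow> s < y i \<longleftrightarrow> i < J"
  proof (cases "\<forall>i<k. s < y i")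
    case True
    then show ?thesis using that[of k] by auto
  next
    case False
    define J where "J = (LEAST i. i < k \<and> y i \<le> s)"
    from False have J_def': "J < k \<and> y J \<le> s"
      unfolding J_def by (metis (mono_tags, lifting) LeastI not_less)
    have "s < y i \<longleftrightarrow> i < J" if "i < k" for i
      using y_antimono[of J i] not_less_Least[of i "\<lambda>i. i < k \<and> y i \<le> s"] J_def' that
      unfolding J_def by (metis not_le not_less_iff_gr_or_eq order.strict_trans1)
    then show ?thesis using that[of J] J_def' by auto
  qed
  have "int (\<Sum>i<k. y i - s) = (\<Sum>i<J. int (y i) - int s)"
  proof -
    have "y i \<le> s" if "J \<le> i" "i < k" for i
      using J(2)[OF that(2)] that(1) by simp
    then have "(\<Sum>i<k. y i - s) = (\<Sum>i<J. y i - s)"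
      by (intro sum.mono_neutral_right) (use J(1) in auto)
    then show ?thesis using J by (simp add: less_imp_le)
  qed
  also have "\<dots> \<le> (\<Sum>i<J. int (x i) - int s)"
    using partial_sums[OF J(1)] by (simp add: sum_subtractf flip: of_nat_sum)
  also have "\<dots> \<le> (\<Sum>i<J. int (x i - s))"
    by (rule sum_mono) auto
  also have "\<dots> \<le> int (\<Sum>i<k. x i - s)"
    using J(1) by (simp add: sum_mono2)
  finally show ?thesis by linarith
qed

lemma hinge_expansion:
  fixes \<phi> :: "nat \<Rightarrow> real"
  defines "d \<equiv> \<lambda>s. \<phi> (Suc s) - \<phi> s"
  assumes "1 \<le> m" "m \<le> N"
  shows "\<phi> m = \<phi> 1 + real (m - 1) * d 1 + (\<Sum>t=1..<N. (d (Suc t) - d t) * real (m - 1 - t))"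
proof -
  have expansion: "\<phi> m = \<phi> 1 + real (m - 1) * d 1 + (\<Sum>t=1..<m. (d (Suc t) - d t) * real (m - 1 - t))"
    using \<open>1 \<le> m\<close>
  proof (induction m rule: dec_induct)
    case (step m)
    have "(\<Sum>t=1..<Suc m. (d (Suc t) - d t) * real (Suc m - 1 - t))
        = (\<Sum>t=1..<m. (d (Suc t) - d t) * real (m - 1 - t) + (d (Suc t) - d t))"
      using step(1) by (auto intro!: sum.cong simp: Suc_diff_le algebra_simps of_nat_diff)
    also have "\<dots> = (\<Sum>t=1..<m. (d (Suc t) - d t) * real (m - 1 - t)) + (\<Sum>t=1..<m. d (Suc t) - d t)"
      by (rule sum.distrib)
    also have "(\<Sum>t=1..<m. d (Suc t) - d t) = d m - d 1"
      using step(1) by (rule sum_Suc_diff')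
    finally show ?case using step by (simp add: d_def of_nat_diff algebra_simps)
  qed simp
  have "(\<Sum>t=1..<N. (d (Suc t) - d t) * real (m - 1 - t)) = (\<Sum>t=1..<m. (d (Suc t) - d t) * real (m - 1 - t))"
    by (rule sum.mono_neutral_right) (use assms in auto)
  with expansion show ?thesis by simp
qed

(* Expanding \<phi> by hinge_expansion, the affine parts of both sides agree and the hinge parts
   compare by hinge_sum_le, weighted by the nonnegative second differences e t. *)
lemma karamata_nat:
  fixes x y :: "nat \<Rightarrow> nat" and \<phi> :: "nat \<Rightarrow> real"
  assumes pos: "\<And>i. i < k \<Longrightarrow> 1 \<le> x i \<and> 1 \<le> y i"
    and y_antimono: "\<And>i j. i \<le> j \<Longrightarrow> j < k \<Longrightarrow> y j \<le> y i"
    and partial_sums: "\<And>J. J \<le> k \<Longrightarrow> (\<Sum>i<J. y i) \<le> (\<Sum>i<J. x i)"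
    and total: "(\<Sum>i<k. y i) = (\<Sum>i<k. x i)"
    and convex: "\<And>t. 1 \<le> t \<Longrightarrow> \<phi> (Suc t) - \<phi> t \<le> \<phi> (Suc (Suc t)) - \<phi> (Suc t)"
  shows "(\<Sum>i<k. \<phi> (y i)) \<le> (\<Sum>i<k. \<phi> (x i))"
proof -
  define d where "d = (\<lambda>s. \<phi> (Suc s) - \<phi> s)"
  define e where "e = (\<lambda>t. d (Suc t) - d t)"
  define N where "N = Suc (\<Sum>i<k. x i + y i)"
  have expand: "(\<Sum>i<k. \<phi> (z i)) = real k * \<phi> 1 + real (\<Sum>i<k. z i - 1) * d 1
     + (\<Sum>t=1..<N. e t * real (\<Sum>i<k. z i - Suc t))" if "z = x \<or> z = y" for z
  proof -
    have "z i \<le> N" if "i < k" for i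
      using member_le_sum[of i "{..<k}" "\<lambda>i. x i + y i"] \<open>z = x \<or> z = y\<close> that
      unfolding N_def by auto
    then have "(\<Sum>i<k. \<phi> (z i)) = (\<Sum>i<k. \<phi> 1 + real (z i - 1) * d 1 + (\<Sum>t=1..<N. e t * real (z i - 1 - t)))"
      using pos that unfolding e_def d_def by (intro sum.cong refl hinge_expansion) auto
    also have "\<dots> = real k * \<phi> 1 + real (\<Sum>i<k. z i - 1) * d 1
        + (\<Sum>t=1..<N. e t * real (\<Sum>i<k. z i - Suc t))"
      by (simp add: sum.distrib sum_distrib_left sum_distrib_right, rule sum.swap)
    finally show ?thesis .
  qed
  have "(\<Sum>i<k. z i - 1) + k = (\<Sum>i<k. z i)" if "z = x \<or> z = y" for z
  proof -
    have "(\<Sum>i<k. z i) = (\<Sum>i<k. (z i - 1) + 1)"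
      using pos that by (intro sum.cong) force+
    then show ?thesis by (simp only: sum.distrib) simp
  qed
  with total have linear_parts: "(\<Sum>i<k. y i - 1) = (\<Sum>i<k. x i - 1)"
    by (metis add_right_imp_eq)
  have "(\<Sum>t=1..<N. e t * real (\<Sum>i<k. y i - Suc t)) \<le> (\<Sum>t=1..<N. e t * real (\<Sum>i<k. x i - Suc t))"
  proof (rule sum_mono)
    fix t assume "t \<in> {1..<N}"
    then have "0 \<le> e t" using convex[of t] by (simp add: e_def d_def)
    moreover have "(\<Sum>i<k. y i - Suc t) \<le> (\<Sum>i<k. x i - Suc t)"
      by (rule hinge_sum_le) (use y_antimono partial_sums in auto)
    ultimately show "e t * real (\<Sum>i<k. y i - Suc t) \<le> e t * real (\<Sum>i<k. x i - Suc t)"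
      by (intro mult_left_mono) (simp_all only: of_nat_le_iff)
  qed
  then show ?thesis using expand[of x] expand[of y] linear_parts by (simp del: of_nat_sum)
qed

lemma sum_list_map_le_of_dom_prec:
  fixes \<phi> :: "nat \<Rightarrow> real"
  assumes ns: "ns \<in> int_partitions n k" and ns': "ns' \<in> int_partitions n k"
    and dom: "dom_prec ns ns'"
    and convex: "\<And>t. 1 \<le> t \<Longrightarrow> \<phi> (Suc t) - \<phi> t \<le> \<phi> (Suc (Suc t)) - \<phi> (Suc t)"
  shows "sum_list (map \<phi> ns') \<le> sum_list (map \<phi> ns)"
proof -
  from ns have len: "length ns = k" and pos: "\<forall>x\<in>set ns. 0 < x" and sum: "sum_list ns = n"
    by (auto simp: int_partitions_def)
  from ns' have len': "length ns' = k" and sorted': "sorted_wrt (\<ge>) ns'"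
    and pos': "\<forall>x\<in>set ns'. 0 < x" and sum': "sum_list ns' = n"
    by (auto simp: int_partitions_def)
  have take_eq: "sum_list (take J xs) = (\<Sum>i<J. xs ! i)" if "J \<le> length xs" for J and xs :: "nat list"
    using that by (simp add: sum_list_sum_nth atLeast0LessThan min_absorb2)
  have "(\<Sum>i<k. \<phi> (ns' ! i)) \<le> (\<Sum>i<k. \<phi> (ns ! i))"
  proof (rule karamata_nat)
    show "1 \<le> ns ! i \<and> 1 \<le> ns' ! i" if "i < k" for i
      using pos pos' that len len' by (auto simp: Suc_le_eq)
    show "ns' ! j \<le> ns' ! i" if "i \<le> j" "j < k" for i j
      using sorted_wrt_nth_less[OF sorted', of i j] that len' by (cases "i = j") auto
    show "(\<Sum>i<J. ns' ! i) \<le> (\<Sum>i<J. ns ! i)" if "J \<le> k" for J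
    proof (cases "J = 0")
      case False
      with dom that len have "sum_list (take J ns') \<le> sum_list (take J ns)"
        by (auto simp: dom_prec_def)
      with that len len' show ?thesis by (simp add: take_eq)
    qed simp
    show "(\<Sum>i<k. ns' ! i) = (\<Sum>i<k. ns ! i)"
      using take_eq[of k ns] take_eq[of k ns'] len len' sum sum' by simp
  qed (rule convex)
  then show ?thesis using len len' by (simp add: sum_list_sum_nth atLeast0LessThan)
qed

lemma prod_list_map_eq_exp_sum_ln:
  fixes f :: "'a \<Rightarrow> real"
  assumes "\<forall>x\<in>set xs. 0 < f x"
  shows "prod_list (map f xs) = exp (sum_list (map (\<lambda>x. ln (f x)) xs))"
  using assms by (induction xs) (auto simp: exp_add exp_ln)

lemma prod_list_map_le_of_dom_prec:
  fixes W :: "nat \<Rightarrow> real"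
  assumes W_pos: "\<And>s. 1 \<le> s \<Longrightarrow> 0 < W s"
    and ns: "ns \<in> int_partitions n k" and ns': "ns' \<in> int_partitions n k"
    and dom: "dom_prec ns ns'"
    and ratio_mono: "\<And>t. 1 \<le> t \<Longrightarrow> W (t + 1) / W t \<le> W (t + 2) / W (t + 1)"
  shows "prod_list (map W ns') \<le> prod_list (map W ns)"
proof -
  have "\<forall>x\<in>set xs. 0 < W x" if "xs \<in> int_partitions n k" for xs
    using that W_pos by (auto simp: int_partitions_def Suc_le_eq)
  moreover have "sum_list (map (\<lambda>s. ln (W s)) ns') \<le> sum_list (map (\<lambda>s. ln (W s)) ns)"
  proof (rule sum_list_map_le_of_dom_prec[OF ns ns' dom])
    fix t :: nat assume t: "1 \<le> t"
    then have pos: "0 < W t" "0 < W (t + 1)" "0 < W (t + 2)" using W_pos by auto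
    with ratio_mono[OF t] have "ln (W (t + 1) / W t) \<le> ln (W (t + 2) / W (t + 1))"
      by simp
    with pos show "ln (W (Suc t)) - ln (W t) \<le> ln (W (Suc (Suc t))) - ln (W (Suc t))"
      by (simp add: ln_div)
  qed
  ultimately show ?thesis using ns ns' by (simp add: prod_list_map_eq_exp_sum_ln)
qed

lemma prod_list_map_ge_of_dom_prec:
  fixes W :: "nat \<Rightarrow> real"
  assumes W_pos: "\<And>s. 1 \<le> s \<Longrightarrow> 0 < W s"
    and ns: "ns \<in> int_partitions n k" and ns': "ns' \<in> int_partitions n k"
    and dom: "dom_prec ns ns'"
    and ratio_antimono: "\<And>t. 1 \<le> t \<Longrightarrow> W (t + 2) / W (t + 1) \<le> W (t + 1) / W t"
  shows "prod_list (map W ns) \<le> prod_list (map W ns')"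
proof -
  have pos: "0 < prod_list (map W xs)" if "xs \<in> int_partitions n k" for xs
  proof -
    have "\<forall>x\<in>set xs. 0 < W x" using that W_pos by (auto simp: int_partitions_def Suc_le_eq)
    then show ?thesis by (simp add: prod_list_map_eq_exp_sum_ln)
  qed
  have inverse_prod: "prod_list (map (\<lambda>s. inverse (W s)) xs) = inverse (prod_list (map W xs))" for xs
    by (induction xs) (simp_all add: inverse_mult_distrib)
  have "prod_list (map (\<lambda>s. inverse (W s)) ns') \<le> prod_list (map (\<lambda>s. inverse (W s)) ns)"
  proof (rule prod_list_map_le_of_dom_prec[OF _ ns ns' dom])
    fix t :: nat assume t: "1 \<le> t"
    then have "0 < W t" "0 < W (t + 1)" "0 < W (t + 2)" using W_pos by auto
    with ratio_antimono[OF t]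
    show "inverse (W (t + 1)) / inverse (W t) \<le> inverse (W (t + 2)) / inverse (W (t + 1))"
      by (simp add: divide_simps mult.commute)
  qed (use W_pos in simp)
  then show ?thesis using pos[OF ns] pos[OF ns'] by (simp add: inverse_prod inverse_le_iff_le)
qed

lemma dom_prec_two_parts:
  assumes "1 \<le> m"
  shows "[m + 2, m] \<in> int_partitions (2 * m + 2) 2" "[m + 1, m + 1] \<in> int_partitions (2 * m + 2) 2"
    "dom_prec [m + 2, m] [m + 1, m + 1]"
proof -
  have "{1..length [m + 2, m]} = {1, 2}" by auto
  then show "dom_prec [m + 2, m] [m + 1, m + 1]" by (auto simp: dom_prec_def)
qed (use assms in \<open>auto simp: int_partitions_def\<close>)

lemma balance_averse_gibbs_eppf_iff:
  fixes V :: "nat \<Rightarrow> nat \<Rightarrow> real" and W :: "nat \<Rightarrow> real"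
  assumes V_nonneg: "\<forall>n k. 0 \<le> V n k" and V_pos: "\<forall>n k. 1 \<le> k \<and> k \<le> n \<longrightarrow> 0 < V n k"
    and W_pos: "\<forall>s. 1 \<le> s \<longrightarrow> 0 < W s"
  shows "(\<forall>m\<ge>1. W (m + 1) / W m \<le> W (m + 2) / W (m + 1))
     \<longleftrightarrow> (\<forall>n\<ge>1. balance_averse (gibbs_eppf V W) n)"
proof (intro iffI allI impI)
  fix n :: nat
  assume "\<forall>m\<ge>1. W (m + 1) / W m \<le> W (m + 2) / W (m + 1)"
  then show "balance_averse (gibbs_eppf V W) n"
    using prod_list_map_le_of_dom_prec[OF W_pos[rule_format]] V_nonneg
    by (auto simp: balance_averse_def gibbs_eppf_def int_partitions_def intro!: mult_left_mono)
next
  fix m :: nat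
  assume "\<forall>n\<ge>1. balance_averse (gibbs_eppf V W) n" and "1 \<le> m"
  with dom_prec_two_parts[OF \<open>1 \<le> m\<close>]
  have "gibbs_eppf V W (2 * m + 2) [m + 1, m + 1] \<le> gibbs_eppf V W (2 * m + 2) [m + 2, m]"
    unfolding balance_averse_def by force
  moreover have "0 < V (2 * m + 2) 2" "0 < W m" "0 < W (m + 1)"
    using V_pos W_pos \<open>1 \<le> m\<close> by auto
  ultimately show "W (m + 1) / W m \<le> W (m + 2) / W (m + 1)"
    by (simp add: gibbs_eppf_def numeral_2_eq_2 divide_simps mult.commute)
qed

lemma balance_seeking_gibbs_eppf_iff:
  fixes V :: "nat \<Rightarrow> nat \<Rightarrow> real" and W :: "nat \<Rightarrow> real"
  assumes V_nonneg: "\<forall>n k. 0 \<le> V n k" and V_pos: "\<forall>n k. 1 \<le> k \<and> k \<le> n \<longrightarrow> 0 < V n k"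
    and W_pos: "\<forall>s. 1 \<le> s \<longrightarrow> 0 < W s"
  shows "(\<forall>m\<ge>1. W (m + 2) / W (m + 1) \<le> W (m + 1) / W m)
     \<longleftrightarrow> (\<forall>n\<ge>1. balance_seeking (gibbs_eppf V W) n)"
proof (intro iffI allI impI)
  fix n :: nat
  assume "\<forall>m\<ge>1. W (m + 2) / W (m + 1) \<le> W (m + 1) / W m"
  then show "balance_seeking (gibbs_eppf V W) n"
    using prod_list_map_ge_of_dom_prec[OF W_pos[rule_format]] V_nonneg
    by (auto simp: balance_seeking_def gibbs_eppf_def int_partitions_def intro!: mult_left_mono)
next
  fix m :: nat
  assume "\<forall>n\<ge>1. balance_seeking (gibbs_eppf V W) n" and "1 \<le> m"
  with dom_prec_two_parts[OF \<open>1 \<le> m\<close>]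
  have "gibbs_eppf V W (2 * m + 2) [m + 2, m] \<le> gibbs_eppf V W (2 * m + 2) [m + 1, m + 1]"
    unfolding balance_seeking_def by force
  moreover have "0 < V (2 * m + 2) 2" "0 < W m" "0 < W (m + 1)"
    using V_pos W_pos \<open>1 \<le> m\<close> by auto
  ultimately show "W (m + 2) / W (m + 1) \<le> W (m + 1) / W m"
    by (simp add: gibbs_eppf_def numeral_2_eq_2 divide_simps mult.commute)
qed

definition rank_in :: "nat set \<Rightarrow> nat \<Rightarrow> nat" where
  "rank_in A a = card {a' \<in> A. a' \<le> a}"

lemma rank_in_strict_mono:
  assumes "finite A" "b \<in> A" "a < b"
  shows "rank_in A a < rank_in A b"
proof -
  have "{a' \<in> A. a' \<le> a} \<subseteq> {a' \<in> A. a' \<le> b}" "b \<in> {a' \<in> A. a' \<le> b} - {a' \<in> A. a' \<le> a}"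
    using assms by auto
  then have "{a' \<in> A. a' \<le> a} \<subset> {a' \<in> A. a' \<le> b}"
    by blast
  then show ?thesis
    unfolding rank_in_def using assms(1) by (intro psubset_card_mono) auto
qed

lemma rank_in_inj_on: "finite A \<Longrightarrow> inj_on (rank_in A) A"
  by (rule inj_onI) (metis less_irrefl linorder_neqE_nat rank_in_strict_mono)

lemma rank_in_image:
  assumes "finite A"
  shows "rank_in A ` A = {1..card A}"
proof (rule card_subset_eq)
  show "rank_in A ` A \<subseteq> {1..card A}"
  proof
    fix r assume "r \<in> rank_in A ` A"
    then obtain a where "a \<in> A" "r = rank_in A a" by blast
    with assms have "{a' \<in> A. a' \<le> a} \<noteq> {}" "{a' \<in> A. a' \<le> a} \<subseteq> A" by auto
    with assms \<open>r = rank_in A a\<close> show "r \<in> {1..card A}"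
      unfolding rank_in_def by (auto simp: Suc_le_eq card_gt_0_iff card_mono finite_subset)
  qed
  show "card (rank_in A ` A) = card {1..card A}"
    using card_image[OF rank_in_inj_on[OF assms]] by simp
qed simp

lemma rank_in_insert_greater: "a < b \<Longrightarrow> rank_in (insert b A) a = rank_in A a"
  unfolding rank_in_def by (rule arg_cong[where f = card]) auto

lemma rank_in_insert_Max:
  assumes "finite A" "\<forall>a\<in>A. a < b"
  shows "rank_in (insert b A) b = card A + 1"
proof -
  from assms(2) have "{a' \<in> insert b A. a' \<le> b} = insert b A" "b \<notin> A" by auto
  with assms(1) show ?thesis unfolding rank_in_def by simp
qed

locale labelled_partition =
  fixes S :: "nat set" and P :: "nat set set"
  assumes finite_S: "finite S" and partition: "partition_on S P"
begin

lemma finite_P: "finite P"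
  using finite_elements[OF finite_S partition] .

lemma block_props: "B \<in> P \<Longrightarrow> B \<noteq> {} \<and> finite B \<and> B \<subseteq> S"
  using partition finite_S by (auto simp: partition_on_def intro: finite_subset)

lemma block_unique: "B \<in> P \<Longrightarrow> B' \<in> P \<Longrightarrow> x \<in> B \<Longrightarrow> x \<in> B' \<Longrightarrow> B = B'"
  using partition unfolding partition_on_def disjoint_def by blast

lemma block_of_eq: "B \<in> P \<Longrightarrow> i \<in> B \<Longrightarrow> block_of P i = B"
  unfolding block_of_def by (rule the_equality) (auto dest: block_unique)

lemma block_of_mem: "i \<in> S \<Longrightarrow> block_of P i \<in> P \<and> i \<in> block_of P i"
  using partition block_of_eq by (auto simp: partition_on_def)

lemma block_of_image: "block_of P ` S = P"
proof
  show "P \<subseteq> block_of P ` S"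
  proof
    fix B assume "B \<in> P"
    with block_props obtain i where "i \<in> B" by blast
    with \<open>B \<in> P\<close> block_props block_of_eq show "B \<in> block_of P ` S" by blast
  qed
qed (use block_of_mem in auto)

lemma inj_on_Min: "inj_on Min P"
  by (rule inj_onI) (metis Min_in block_props block_unique)

lemma zlab_eq_rank_in: "zlab P i = rank_in (Min ` P) (Min (block_of P i))"
proof -
  have "card {B' \<in> P. Min B' \<le> Min (block_of P i)} = card (Min ` {B' \<in> P. Min B' \<le> Min (block_of P i)})"
    by (rule card_image[symmetric]) (rule inj_on_subset[OF inj_on_Min], auto)
  also have "Min ` {B' \<in> P. Min B' \<le> Min (block_of P i)} = {a \<in> Min ` P. a \<le> Min (block_of P i)}"
    by auto
  finally show ?thesis unfolding zlab_def rank_in_def .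
qed

lemma zlab_eq_iff:
  assumes "i \<in> S" "i' \<in> S"
  shows "zlab P i = zlab P i' \<longleftrightarrow> block_of P i = block_of P i'"
proof
  assume "zlab P i = zlab P i'"
  then have "rank_in (Min ` P) (Min (block_of P i)) = rank_in (Min ` P) (Min (block_of P i'))"
    by (simp only: zlab_eq_rank_in)
  then have "Min (block_of P i) = Min (block_of P i')"
    by (rule inj_onD[OF rank_in_inj_on[OF finite_imageI[OF finite_P]]]) (use assms block_of_mem in auto)
  then show "block_of P i = block_of P i'"
    by (rule inj_onD[OF inj_on_Min]) (use assms block_of_mem in auto)
qed (simp add: zlab_def)

lemma zlab_class_eq_block_of:
  assumes "i \<in> S"
  shows "{i' \<in> S. zlab P i' = zlab P i} = block_of P i"
proof safe
  fix i' assume "i' \<in> S" "zlab P i' = zlab P i"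
  with assms have "block_of P i' = block_of P i" by (simp add: zlab_eq_iff)
  with \<open>i' \<in> S\<close> show "i' \<in> block_of P i" using block_of_mem by metis
next
  fix i' assume i': "i' \<in> block_of P i"
  with assms show "i' \<in> S" using block_of_mem block_props by blast
  with i' assms show "zlab P i' = zlab P i" using block_of_mem block_of_eq zlab_eq_iff by metis
qed

lemma zlab_image: "zlab P ` S = {1..card P}"
proof -
  have "zlab P ` S = rank_in (Min ` P) ` Min ` block_of P ` S"
    by (auto simp: zlab_eq_rank_in)
  also have "\<dots> = {1..card P}"
    using rank_in_image[of "Min ` P"] finite_P card_image[OF inj_on_Min] by (simp add: block_of_image)
  finally show ?thesis .
qed

lemma eq_image_zlab_classes: "P = (\<lambda>i. {i' \<in> S. zlab P i' = zlab P i}) ` S"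
proof -
  have "(\<lambda>i. {i' \<in> S. zlab P i' = zlab P i}) ` S = block_of P ` S"
    using zlab_class_eq_block_of by (rule image_cong[OF refl])
  then show ?thesis by (simp add: block_of_image)
qed

end

lemma partition_eq_if_zlab_eq:
  assumes "finite S" "partition_on S P" "partition_on S Q" "\<forall>i\<in>S. zlab P i = zlab Q i"
  shows "P = Q"
proof -
  interpret P: labelled_partition S P using assms by unfold_locales
  interpret Q: labelled_partition S Q using assms by unfold_locales
  have "(\<lambda>i. {i' \<in> S. zlab P i' = zlab P i}) ` S = (\<lambda>i. {i' \<in> S. zlab Q i' = zlab Q i}) ` S"
    using assms(4) by (intro image_cong) auto
  then show ?thesis
    using P.eq_image_zlab_classes Q.eq_image_zlab_classes by simp
qed

definition add_to_block :: "'a \<Rightarrow> 'a set \<Rightarrow> 'a set set \<Rightarrow> 'a set set" where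
  "add_to_block a B P = insert (insert a B) (P - {B})"

locale partition_extension = labelled_partition +
  fixes a :: nat
  assumes greater: "\<forall>x\<in>S. x < a"
begin

lemma notin_block: "B \<in> P \<Longrightarrow> a \<notin> B"
  using greater block_props by blast

lemma Min_less: "B \<in> P \<Longrightarrow> Min B < a"
  using greater block_props Min_in by blast

lemma partition_insert_singleton: "partition_on (insert a S) (insert {a} P)"
proof -
  have "a \<notin> S" using greater by blast
  then show ?thesis
    using partition partition_onD1[OF partition] by (subst partition_on_insert) (auto simp: disjnt_def)
qed

lemma zlab_insert_singleton:
  "i \<in> S \<Longrightarrow> zlab (insert {a} P) i = zlab P i"
  "zlab (insert {a} P) a = card P + 1"
proof -
  interpret new: labelled_partition "insert a S" "insert {a} P"
    using partition_insert_singleton finite_S by unfold_locales simp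
  have Mins_less: "\<forall>x\<in>Min ` P. x < a" using Min_less by blast
  show "zlab (insert {a} P) a = card P + 1"
    using new.block_of_eq[of "{a}" a] rank_in_insert_Max[OF finite_imageI[OF finite_P] Mins_less]
    by (simp add: new.zlab_eq_rank_in card_image[OF inj_on_Min])
  assume i: "i \<in> S"
  then have "block_of (insert {a} P) i = block_of P i"
    using block_of_mem by (intro new.block_of_eq) auto
  with i Mins_less block_of_mem show "zlab (insert {a} P) i = zlab P i"
    by (simp add: new.zlab_eq_rank_in zlab_eq_rank_in rank_in_insert_greater)
qed

lemma partition_add_to_block:
  assumes "B \<in> P"
  shows "partition_on (insert a S) (add_to_block a B P)"
proof -
  have disj: "disjnt B (\<Union>(P - {B}))"
    using assms block_unique by (auto simp: disjnt_def)
  have "partition_on S (insert B (P - {B}))"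
    using assms partition by (simp add: insert_absorb)
  with partition_on_insert[OF disj] have rest: "partition_on (S - B) (P - {B})"
    by blast
  have "disjnt (insert a B) (\<Union>(P - {B}))"
    using disj notin_block by (auto simp: disjnt_def)
  moreover have "insert a S - insert a B = S - B"
    using greater by auto
  ultimately show ?thesis
    unfolding add_to_block_def using rest assms block_props by (subst partition_on_insert) auto
qed

lemma zlab_add_to_block:
  assumes "B \<in> P"
  shows "i \<in> S \<Longrightarrow> zlab (add_to_block a B P) i = zlab P i"
    and "b \<in> B \<Longrightarrow> zlab (add_to_block a B P) a = zlab P b"
proof -
  interpret new: labelled_partition "insert a S" "add_to_block a B P"
    using partition_add_to_block[OF assms] finite_S by unfold_locales simp
  have Min_insert_a: "Min (insert a B) = Min B"
    using assms block_props Min_less by (subst Min_insert) (auto intro: min_absorb2 less_imp_le)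
  have Min_image: "Min ` add_to_block a B P = Min ` P"
    using assms Min_insert_a by (auto simp: add_to_block_def)
  have Min_block: "Min (block_of (add_to_block a B P) i) = Min (block_of P i)" if "i \<in> S" for i
  proof (cases "i \<in> B")
    case True
    then show ?thesis
      using new.block_of_eq[of "insert a B" i] block_of_eq[OF assms] Min_insert_a
      by (simp add: add_to_block_def)
  next
    case False
    with \<open>i \<in> S\<close> have "block_of P i \<in> P - {B}" "i \<in> block_of P i"
      using block_of_mem by auto
    then have "block_of (add_to_block a B P) i = block_of P i"
      by (intro new.block_of_eq) (auto simp: add_to_block_def)
    then show ?thesis by simp
  qed
  show "zlab (add_to_block a B P) i = zlab P i" if "i \<in> S"
    using Min_block[OF that] Min_image by (simp add: new.zlab_eq_rank_in zlab_eq_rank_in)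
  show "zlab (add_to_block a B P) a = zlab P b" if "b \<in> B"
  proof -
    have "block_of (add_to_block a B P) a = insert a B"
      by (rule new.block_of_eq) (auto simp: add_to_block_def)
    then show ?thesis
      using that assms Min_insert_a Min_image block_of_eq
      by (simp add: new.zlab_eq_rank_in zlab_eq_rank_in)
  qed
qed

lemma gibbs_insert_singleton:
  "gibbs V W m (insert {a} P) = V m (card P + 1) * W 1 * (\<Prod>B\<in>P. W (card B))"
proof -
  have "{a} \<notin> P" using notin_block by blast
  then show ?thesis unfolding gibbs_def using finite_P by simp
qed

lemma gibbs_add_to_block:
  assumes "B \<in> P"
  shows "gibbs V W m (add_to_block a B P) * W (card B)
    = V m (card P) * W (card B + 1) * (\<Prod>B'\<in>P. W (card B'))"
proof -
  have new: "insert a B \<notin> P - {B}" using notin_block by blast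
  have "card (add_to_block a B P) = card P"
    unfolding add_to_block_def using card_insert_disjoint[OF _ new] card_Suc_Diff1[OF finite_P assms] finite_P
    by simp
  moreover have "card (insert a B) = card B + 1"
    using notin_block[OF assms] block_props[OF assms] by simp
  moreover have "(\<Prod>B'\<in>P. W (card B')) = W (card B) * (\<Prod>B'\<in>P - {B}. W (card B'))"
    using finite_P assms by (rule prod.remove)
  ultimately show ?thesis
    unfolding gibbs_def add_to_block_def using new finite_P by simp
qed

end

lemma gibbs_nonneg:
  assumes "\<forall>n k. 0 \<le> V n k" "\<forall>s. 0 \<le> W s"
  shows "0 \<le> gibbs V W m P"
  using assms unfolding gibbs_def by (simp add: prod_nonneg)

lemma gibbs_le_gibbs_prob:
  assumes "\<forall>n k. 0 \<le> V n k" "\<forall>s. 0 \<le> W s" "Q \<in> set_partitions m \<inter> E"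
  shows "gibbs V W m Q \<le> gibbs_prob V W m E"
proof -
  have "finite (set_partitions m)"
    unfolding set_partitions_def by (rule finitely_many_partition_on) simp
  with assms show ?thesis
    unfolding gibbs_prob_def by (intro member_le_sum gibbs_nonneg) auto
qed

definition prefix_event :: "nat \<Rightarrow> nat set set \<Rightarrow> nat set set set" where
  "prefix_event n \<pi> = {P. \<forall>i\<in>{1..n}. zlab P i = zlab \<pi> i}"

lemma gibbs_cond_eq_of_extension:
  assumes Q: "Q \<in> set_partitions (n + 1)" "Q \<in> prefix_event n \<pi>"
  shows "gibbs_cond V W (n + 1) {P. zlab P (n + 1) = zlab Q (n + 1)} (prefix_event n \<pi>)
    = gibbs V W (n + 1) Q / gibbs_prob V W (n + 1) (prefix_event n \<pi>)"
proof -
  have "set_partitions (n + 1) \<inter> ({P. zlab P (n + 1) = zlab Q (n + 1)} \<inter> prefix_event n \<pi>) = {Q}"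
  proof (intro equalityI subsetI)
    fix P assume P: "P \<in> set_partitions (n + 1) \<inter> ({P. zlab P (n + 1) = zlab Q (n + 1)} \<inter> prefix_event n \<pi>)"
    with Q have "\<forall>i\<in>{1..n + 1}. zlab P i = zlab Q i"
      by (auto simp: prefix_event_def le_Suc_eq)
    with P Q have "P = Q"
      by (intro partition_eq_if_zlab_eq[of "{1..n + 1}"]) (auto simp: set_partitions_def)
    then show "P \<in> {Q}" by simp
  qed (use Q in auto)
  then show ?thesis unfolding gibbs_cond_def gibbs_prob_def by simp
qed

locale prefix_partition = partition_extension "{1..n}" \<pi> "n + 1" for n :: nat and \<pi> :: "nat set set"
begin

lemma interval_insert: "insert (n + 1) {1..n} = {1..n + 1}"
  by auto

lemma card_le: "card \<pi> \<le> n"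
  using card_image_le[of "{1..n}" "zlab \<pi>"] zlab_image by simp

lemma card_pos: "1 \<le> n \<Longrightarrow> 1 \<le> card \<pi>"
  using zlab_image imageI[of 1 "{1..n}" "zlab \<pi>"] by auto

lemma new_block_extension:
  "insert {n + 1} \<pi> \<in> set_partitions (n + 1)" "insert {n + 1} \<pi> \<in> prefix_event n \<pi>"
  "zlab (insert {n + 1} \<pi>) (n + 1) = card \<pi> + 1"
  using partition_insert_singleton[unfolded interval_insert] zlab_insert_singleton
  by (simp_all add: set_partitions_def prefix_event_def)

lemma join_block_extension:
  assumes "B \<in> \<pi>" "b \<in> B"
  shows "add_to_block (n + 1) B \<pi> \<in> set_partitions (n + 1)"
    "add_to_block (n + 1) B \<pi> \<in> prefix_event n \<pi>"
    "zlab (add_to_block (n + 1) B \<pi>) (n + 1) = zlab \<pi> b"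
  using partition_add_to_block[OF assms(1), unfolded interval_insert] zlab_add_to_block[OF assms(1)] assms(2)
  by (simp_all add: set_partitions_def prefix_event_def)

lemma gibbs_prob_prefix_event_pos:
  assumes "\<forall>n k. 0 \<le> V n k" "\<forall>s. 0 \<le> W s"
    and V_pos: "\<forall>n k. 1 \<le> k \<and> k \<le> n \<longrightarrow> 0 < V n k" and W_pos: "\<forall>s. 1 \<le> s \<longrightarrow> 0 < W s"
  shows "0 < gibbs_prob V W (n + 1) (prefix_event n \<pi>)"
proof -
  have "0 < (\<Prod>B\<in>\<pi>. W (card B))"
    using W_pos block_props by (intro prod_pos) (auto simp: Suc_le_eq card_gt_0_iff)
  moreover have "0 < V (n + 1) (card \<pi> + 1)" "0 < W 1"
    using V_pos W_pos card_le by simp_all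
  ultimately have "0 < gibbs V W (n + 1) (insert {n + 1} \<pi>)"
    using gibbs_insert_singleton[of V W "n + 1"] by simp
  also have "\<dots> \<le> gibbs_prob V W (n + 1) (prefix_event n \<pi>)"
    using new_block_extension assms(1,2) by (intro gibbs_le_gibbs_prob) auto
  finally show ?thesis .
qed

lemma gibbs_cond_new_block:
  "gibbs_cond V W (n + 1) {P. zlab P (n + 1) = card \<pi> + 1} (prefix_event n \<pi>)
    = V (n + 1) (card \<pi> + 1) * W 1 * (\<Prod>B\<in>\<pi>. W (card B)) / gibbs_prob V W (n + 1) (prefix_event n \<pi>)"
  using gibbs_cond_eq_of_extension[OF new_block_extension(1,2)] new_block_extension(3)
    gibbs_insert_singleton[of V W "n + 1"]
  by simp

lemma gibbs_cond_join_block: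
  assumes "B \<in> \<pi>" "b \<in> B"
  shows "gibbs_cond V W (n + 1) {P. zlab P (n + 1) = zlab \<pi> b} (prefix_event n \<pi>) * W (card B)
    = V (n + 1) (card \<pi>) * W (card B + 1) * (\<Prod>B'\<in>\<pi>. W (card B')) / gibbs_prob V W (n + 1) (prefix_event n \<pi>)"
  using gibbs_cond_eq_of_extension[OF join_block_extension(1,2)[OF assms]] join_block_extension(3)[OF assms]
    gibbs_add_to_block[OF assms(1)]
  by (simp add: field_simps)

end

lemma gibbs_prediction_rule:
  fixes V :: "nat \<Rightarrow> nat \<Rightarrow> real" and W :: "nat \<Rightarrow> real"
  assumes V_nonneg: "\<forall>n k. 0 \<le> V n k" and W_nonneg: "\<forall>s. 0 \<le> W s" and W1: "W 1 = 1"
    and V_pos: "\<forall>n k. 1 \<le> k \<and> k \<le> n \<longrightarrow> 0 < V n k" and W_pos: "\<forall>s. 1 \<le> s \<longrightarrow> 0 < W s"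
    and n: "1 \<le> n" and \<pi>: "\<pi> \<in> set_partitions n"
  shows "\<exists>c>0. \<forall>j\<in>{1..card \<pi> + 1}.
     gibbs_cond V W (n + 1) {P. zlab P (n + 1) = j} (prefix_event n \<pi>)
       = c * (if j \<le> card \<pi> then W (card {i\<in>{1..n}. zlab \<pi> i = j} + 1) / W (card {i\<in>{1..n}. zlab \<pi> i = j})
              else V (n + 1) (card \<pi> + 1) / V (n + 1) (card \<pi>))"
proof -
  interpret prefix_partition n \<pi>
    using \<pi> by unfold_locales (auto simp: set_partitions_def)
  define G where "G = gibbs_prob V W (n + 1) (prefix_event n \<pi>)"
  define PP where "PP = (\<Prod>B\<in>\<pi>. W (card B))"
  define c where "c = V (n + 1) (card \<pi>) * PP / G"
  have G_pos: "0 < G"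
    unfolding G_def using V_nonneg W_nonneg V_pos W_pos by (rule gibbs_prob_prefix_event_pos)
  have V_pos': "0 < V (n + 1) (card \<pi>)"
    using V_pos card_le card_pos[OF n] by simp
  have "gibbs_cond V W (n + 1) {P. zlab P (n + 1) = j} (prefix_event n \<pi>)
      = c * (W (card {i\<in>{1..n}. zlab \<pi> i = j} + 1) / W (card {i\<in>{1..n}. zlab \<pi> i = j}))"
    if "j \<in> {1..card \<pi>}" for j
  proof -
    from that obtain b where b: "b \<in> {1..n}" "zlab \<pi> b = j"
      using zlab_image by (metis imageE)
    define B where "B = block_of \<pi> b"
    have B: "B \<in> \<pi>" "b \<in> B" "{i\<in>{1..n}. zlab \<pi> i = j} = B"
      using block_of_mem[OF b(1)] zlab_class_eq_block_of[OF b(1)] b(2) by (simp_all add: B_def)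
    moreover have "0 < W (card B)"
      using W_pos block_props[OF B(1)] by (simp add: Suc_le_eq card_gt_0_iff)
    ultimately show ?thesis
      using gibbs_cond_join_block[OF B(1,2), of V W] b(2) G_pos
      unfolding c_def G_def PP_def by (simp add: field_simps)
  qed
  moreover have "gibbs_cond V W (n + 1) {P. zlab P (n + 1) = card \<pi> + 1} (prefix_event n \<pi>)
      = c * (V (n + 1) (card \<pi> + 1) / V (n + 1) (card \<pi>))"
    using gibbs_cond_new_block[of V W] W1 V_pos'
    unfolding c_def G_def PP_def by (simp add: field_simps)
  moreover have "0 < c"
    unfolding c_def PP_def using V_pos' G_pos W_pos block_props
    by (intro divide_pos_pos mult_pos_pos prod_pos) (auto simp: Suc_le_eq card_gt_0_iff)
  ultimately show ?thesis
    by (intro exI[of _ c]) (auto simp: le_Suc_eq)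
qed

theorem corollary3p3:
  fixes V :: "nat \<Rightarrow> nat \<Rightarrow> real" and W :: "nat \<Rightarrow> real"
  assumes V_nonneg: "\<forall>n k. 0 \<le> V n k"
    and W_nonneg: "\<forall>s. 0 \<le> W s"
    and V11: "V 1 1 = 1" and W1: "W 1 = 1"
    and V_pos: "\<forall>n k. 1 \<le> k \<and> k \<le> n \<longrightarrow> 0 < V n k"
    and W_pos: "\<forall>s. 1 \<le> s \<longrightarrow> 0 < W s"
    and prob: "\<forall>n\<ge>1. gibbs_prob V W n UNIV = 1"
  defines "f \<equiv> (\<lambda>m. W (m + 1) / W m)"
    and "g \<equiv> (\<lambda>n k. V (n + 1) (k + 1) / V (n + 1) k)"
  shows
    "(\<forall>n\<ge>1. \<forall>\<pi>\<in>set_partitions n.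
        let k = card \<pi>;
            nj = (\<lambda>j. card {i\<in>{1..n}. zlab \<pi> i = j});
            C = {P. \<forall>i\<in>{1..n}. zlab P i = zlab \<pi> i}
        in \<exists>c>0. \<forall>j\<in>{1..k+1}.
             gibbs_cond V W (n + 1) {P. zlab P (n + 1) = j} C
               = c * (if j \<le> k then f (nj j) else g n k))
     \<and> ((\<forall>m\<ge>1. f m \<le> f (m + 1)) \<longleftrightarrow> (\<forall>n\<ge>1. balance_averse (gibbs_eppf V W) n))
     \<and> ((\<forall>m\<ge>1. f (m + 1) \<le> f m) \<longleftrightarrow> (\<forall>n\<ge>1. balance_seeking (gibbs_eppf V W) n))"
proof (intro conjI)
  show "\<forall>n\<ge>1. \<forall>\<pi>\<in>set_partitions n.
        let k = card \<pi>;
            nj = (\<lambda>j. card {i\<in>{1..n}. zlab \<pi> i = j});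
            C = {P. \<forall>i\<in>{1..n}. zlab P i = zlab \<pi> i}
        in \<exists>c>0. \<forall>j\<in>{1..k+1}.
             gibbs_cond V W (n + 1) {P. zlab P (n + 1) = j} C
               = c * (if j \<le> k then f (nj j) else g n k)"
    using gibbs_prediction_rule[OF V_nonneg W_nonneg W1 V_pos W_pos]
    unfolding Let_def f_def g_def prefix_event_def by blast
  show "(\<forall>m\<ge>1. f m \<le> f (m + 1)) \<longleftrightarrow> (\<forall>n\<ge>1. balance_averse (gibbs_eppf V W) n)"
    using balance_averse_gibbs_eppf_iff[OF V_nonneg V_pos W_pos] by (simp add: f_def)
  show "(\<forall>m\<ge>1. f (m + 1) \<le> f m) \<longleftrightarrow> (\<forall>n\<ge>1. balance_seeking (gibbs_eppf V W) n)"
    using balance_seeking_gibbs_eppf_iff[OF V_nonneg V_pos W_pos] by (simp add: f_def)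
qed

end
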